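(* Let $N\ge1$, $q\in\mathbb{C}$ with $0<|q|<1$, $j\in\{1,\dots,N\}$, $s,w_2\in\mathbb{C}$, and let $C$ be a simple closed contour in the $w_1$-plane encircling $w_1=0$, $s$, $\sqrt{-1}$, $qw_2$, $qw_2^{-1}$ but not $s^{-1}$, $-\sqrt{-1}$, $q^{-1}w_2$, $q^{-1}w_2^{-1}$. With $H^{2j}(w_1,w_2)$ as in the context, the following operator identities hold: (5) $\oint_C\frac{dw_1}{w_1}(1-sw_1)\Big(1-\frac{q}{w_1w_2}\Big)\frac{1-w_1^2}{1+w_1^2}H^{2j}(w_1,w_2)=-\frac{q}{2w_2}\Big(1-\frac{sw_2}{q}\Big)\oint_C\frac{dw_1}{w_1}\frac{(1-w_1^2)^2}{w_1(1+w_1^2)}H^{2j}(w_1,w_2)$; (6) $\oint_C\frac{dw_1}{w_1}w_1\Big(1-\frac{q}{w_1w_2}\Big)\frac{1-w_1^2}{1+w_1^2}H^{2j}(w_1,w_2)=-\frac12\oint_C\frac{dw_1}{w_1}\frac{(1-w_1^2)^2}{w_1(1+w_1^2)}H^{2j}(w_1,w_2)$; (7) $\oint_C\frac{dw_1}{w_1}\frac{1-\frac{q}{w_1w_2}}{1-s/w_1}\frac{1-w_1^2}{1+w_1^2}H^{2j}(w_1,w_2)=-\frac{q}{2w_2}\Big(1-\frac{sw_2}{q}\Big)\oint_C\frac{dw_1}{w_1}\frac{(1-w_1^2)^2}{w_1(1+w_1^2)}\frac{H^{2j}(w_1,w_2)}{(1-sw_1)(1-s/w_1)}$. Moreover, the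 integral $\oint_C\frac{dw_1}{w_1}\frac{(1-w_1^2)^2}{w_1(1+w_1^2)}H^{2j}(w_1,w_2)$ is invariant under $w_2\to w_2^{-1}$.
   Context: $[n]_q=\frac{q^n-q^{-n}}{q-q^{-1}}$. Bosons $a^i_m$ ($1\le i\le 2N$, $m\in\mathbb{Z}$) and $c^j_m$ ($1\le j\le N$) satisfy $[a^i_m,a^k_n]=(-1)^{i+1}\delta_{i,k}\delta_{m+n,0}\frac{[m]_q^2}{m}$, $[c^j_m,c^l_n]=\delta_{j,l}\delta_{m+n,0}\frac{[m]_q^2}{m}$ ($m\ne0$), other commutators zero. Set $A^i_m=(-1)^{i+1}(a^i_m+a^{i+1}_m)$ ($1\le i\le 2N-1$), $A^i_+(z)=-\sum_{m\ge1}\frac{A^i_m}{[m]_q}q^{m/2}z^{-m}$, $c^j_+(z)=-\sum_{m\ge1}\frac{c^j_m}{[m]_q}z^{-m}$, and $D(z,w)=(1-qzw)(1-qw/z)(1-qz/w)(1-q/(zw))$. Define $$H^{2j}(w_1,w_2)=\frac{\exp\big(-A^{2j}_+(qw_1)-A^{2j}_+(q/w_1)+c^j_+(qw_1)+c^j_+(q/w_1)\big)}{D(w_1,w_2)},$$ where for $j=N$ the index $2N$ of $A^{2N}_+$ is understood via $A^{2N}_m=\frac{q^m+q^{-m}}{2}\sum_{l=1}^{2N}(-1)^{l+1}a^l_m$. The exponentials involve only modes with $m>0$, so on any vector of the bosonic Fock space their matrix elements are Laurent polynomials in $w_1$; the integrals are understood in this sense. *)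

theory Defs
  imports "HOL-Complex_Analysis.Complex_Analysis"
begin

text \<open>A boson species is either
  a^i (constructor Ab i, 1 <= i <= 2N) or c^j (constructor Cb j, 1 <= j <= N).
  The Fock space is realised as the polynomial ring in the creation modes
  x_(b,m) (standing for b_(-m), m >= 1): a vector is a finitely supported
  coefficient function on monomials (finitely supported exponent functions).
  The annihilation mode b_m (m >= 1) acts as kappa_b(m) times the partial
  derivative in x_(b,m), where kappa_b(m) = [b_m, b_(-m)].\<close>

datatype boson = Ab nat | Cb nat

type_synonym fvar = "boson \<times> nat"
type_synonym monom = "fvar \<Rightarrow> nat"
type_synonym fock = "monom \<Rightarrow> complex"

definition qnum :: "complex \<Rightarrow> nat \<Rightarrow> complex" where
  "qnum q m = (q ^ m - inverse q ^ m) / (q - inverse q)"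

definition kappa :: "complex \<Rightarrow> fvar \<Rightarrow> complex" where
  "kappa q x = (case x of
      (Ab i, m) \<Rightarrow> (-1) ^ (i + 1) * qnum q m ^ 2 / of_nat m
    | (Cb j, m) \<Rightarrow> qnum q m ^ 2 / of_nat m)"

definition valid_var :: "nat \<Rightarrow> fvar \<Rightarrow> bool" where
  "valid_var N x = (case x of
      (Ab i, m) \<Rightarrow> 1 \<le> i \<and> i \<le> 2 * N \<and> 1 \<le> m
    | (Cb j, m) \<Rightarrow> 1 \<le> j \<and> j \<le> N \<and> 1 \<le> m)"

definition fock_vec :: "nat \<Rightarrow> fock \<Rightarrow> bool" where
  "fock_vec N v \<longleftrightarrow> finite {\<mu>. v \<mu> \<noteq> 0} \<and>
     (\<forall>\<mu>. v \<mu> \<noteq> 0 \<longrightarrow> finite {x. \<mu> x \<noteq> 0} \<and> (\<forall>x. \<mu> x \<noteq> 0 \<longrightarrow> valid_var N x))"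

definition fvars :: "fock \<Rightarrow> fvar set" where
  "fvars v = {x. \<exists>\<mu>. v \<mu> \<noteq> 0 \<and> \<mu> x \<noteq> 0}"

text \<open>The operator sum over x of beta(x) * b_x (annihilation modes) acting on v.\<close>
definition lin_ann :: "complex \<Rightarrow> (fvar \<Rightarrow> complex) \<Rightarrow> fock \<Rightarrow> fock" where
  "lin_ann q \<beta> v = (\<lambda>\<nu>. \<Sum>x\<in>fvars v.
       \<beta> x * kappa q x * of_nat (Suc (\<nu> x)) * v (\<nu>(x := Suc (\<nu> x))))"

text \<open>Exponential series of that operator applied to v (terminating on Fock vectors).\<close>
definition op_exp :: "complex \<Rightarrow> (fvar \<Rightarrow> complex) \<Rightarrow> fock \<Rightarrow> fock" where
  "op_exp q \<beta> v = (\<lambda>\<nu>. \<Sum>n. (((lin_ann q \<beta>) ^^ n) v \<nu>) / fact n)"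

text \<open>Coefficients of the exponent
  -A^(2j)_+(q w) - A^(2j)_+(q/w) + c^j_+(q w) + c^j_+(q/w)
  in terms of the annihilation modes a^l_m, c^l_m (m >= 1); qh is a chosen
  square root of q, used for q^(m/2).\<close>
definition Zfac :: "complex \<Rightarrow> complex \<Rightarrow> nat \<Rightarrow> complex" where
  "Zfac q w m = inverse (q * w) ^ m + inverse (q / w) ^ m"

definition Acoef :: "nat \<Rightarrow> nat \<Rightarrow> complex \<Rightarrow> nat \<Rightarrow> nat \<Rightarrow> complex" where
  "Acoef N j q l m =
     (if j < N then (if l = 2 * j \<or> l = 2 * j + 1 then -1 else 0)
      else (if 1 \<le> l \<and> l \<le> 2 * N
            then (q ^ m + inverse q ^ m) / 2 * (-1) ^ (l + 1) else 0))"

definition betaH :: "nat \<Rightarrow> nat \<Rightarrow> complex \<Rightarrow> complex \<Rightarrow> complex \<Rightarrow> fvar \<Rightarrow> complex" where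
  "betaH N j q qh w x = (case x of
      (Ab l, m) \<Rightarrow> (if 1 \<le> m then qh ^ m / qnum q m * Zfac q w m * Acoef N j q l m else 0)
    | (Cb l, m) \<Rightarrow> (if l = j \<and> 1 \<le> m then - Zfac q w m / qnum q m else 0))"

definition Dfun :: "complex \<Rightarrow> complex \<Rightarrow> complex \<Rightarrow> complex" where
  "Dfun q z w = (1 - q * z * w) * (1 - q * w / z) * (1 - q * z / w) * (1 - q / (z * w))"

text \<open>Matrix element (component at monomial nu) of H^(2j)(w1,w2) applied to v.\<close>
definition Hc :: "nat \<Rightarrow> nat \<Rightarrow> complex \<Rightarrow> complex \<Rightarrow> fock \<Rightarrow> monom \<Rightarrow> complex \<Rightarrow> complex \<Rightarrow> complex" where
  "Hc N j q qh v \<nu> w1 w2 = op_exp q (betaH N j q qh w1) v \<nu> / Dfun q w1 w2"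

end

theory Submission
  imports Defs
begin

text \<open>On a Fock vector the exponential series terminates, so each matrix element of
  H^(2j)(w1,w2) is a rational function of w1, holomorphic off 0 and the zeros of
  D(w1,w2), and it is invariant under w1 \<mapsto> 1/w1.  The poles of the integrands come in
  pairs {p, 1/p} of which C encircles exactly one; the substitution w1 \<mapsto> 1/w1 negates
  all these winding numbers, so by the residue theorem the integral of f equals that of
  f(1/w1)/w1^2.  Hence only the part of the integrand that is odd under w1 \<mapsto> 1/w1
  contributes, and in each of the three identities this part is the right-hand side.
  The last claim is the invariance of D, hence of H^(2j), under w2 \<mapsto> 1/w2.\<close>

text \<open>lin_ann sums over the variables occurring in its argument, which change from one
  iterate to the next; over a fixed finite index set all iterates have the same shape.\<close>
definition lin_ann_on :: "complex \<Rightarrow> fvar set \<Rightarrow> (fvar \<Rightarrow> complex) \<Rightarrow> fock \<Rightarrow> fock" where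
  "lin_ann_on q S \<beta> u =
     (\<lambda>\<nu>. \<Sum>x\<in>S. \<beta> x * kappa q x * of_nat (Suc (\<nu> x)) * u (\<nu>(x := Suc (\<nu> x))))"

definition total_degree :: "fvar set \<Rightarrow> monom \<Rightarrow> nat" where
  "total_degree S \<mu> = (\<Sum>x\<in>S. \<mu> x)"

lemma finite_fvars: "fock_vec N v \<Longrightarrow> finite (fvars v)"
proof -
  assume v: "fock_vec N v"
  have "fvars v = (\<Union>\<mu>\<in>{\<mu>. v \<mu> \<noteq> 0}. {x. \<mu> x \<noteq> 0})"
    unfolding fvars_def by auto
  then show ?thesis
    using v unfolding fock_vec_def by auto
qed

lemma lin_ann_eq_lin_ann_on:
  assumes "finite S" "fvars u \<subseteq> S"
  shows "lin_ann q \<beta> u = lin_ann_on q S \<beta> u"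
proof -
  have "u (\<nu>(x := Suc (\<nu> x))) = 0" if "x \<notin> fvars u" for x \<nu>
  proof (rule ccontr)
    assume "u (\<nu>(x := Suc (\<nu> x))) \<noteq> 0"
    then have "x \<in> fvars u"
      unfolding fvars_def by (intro CollectI exI[of _ "\<nu>(x := Suc (\<nu> x))"]) simp
    with that show False ..
  qed
  then show ?thesis
    unfolding lin_ann_def lin_ann_on_def
    by (intro ext sum.mono_neutral_left[OF assms]) auto
qed

lemma lin_ann_on_nonzero_imp:
  assumes "lin_ann_on q S \<beta> u \<nu> \<noteq> 0"
  obtains x where "x \<in> S" "u (\<nu>(x := Suc (\<nu> x))) \<noteq> 0"
proof -
  obtain x where "x \<in> S" "\<beta> x * kappa q x * of_nat (Suc (\<nu> x)) * u (\<nu>(x := Suc (\<nu> x))) \<noteq> 0"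
    using assms unfolding lin_ann_on_def by (rule sum.not_neutral_contains_not_neutral)
  then show ?thesis
    using that by simp
qed

lemma fvars_lin_ann_on_subset: "fvars (lin_ann_on q S \<beta> u) \<subseteq> fvars u"
proof
  fix y assume "y \<in> fvars (lin_ann_on q S \<beta> u)"
  then obtain \<nu> where "lin_ann_on q S \<beta> u \<nu> \<noteq> 0" and "\<nu> y \<noteq> 0"
    unfolding fvars_def by auto
  obtain x where "u (\<nu>(x := Suc (\<nu> x))) \<noteq> 0"
    using lin_ann_on_nonzero_imp[OF \<open>lin_ann_on q S \<beta> u \<nu> \<noteq> 0\<close>] by blast
  moreover have "(\<nu>(x := Suc (\<nu> x))) y \<noteq> 0"
    using \<open>\<nu> y \<noteq> 0\<close> by simp
  ultimately show "y \<in> fvars u"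
    unfolding fvars_def by blast
qed

lemma funpow_lin_ann_eq_lin_ann_on:
  assumes "finite S" "fvars u \<subseteq> S"
  shows "(lin_ann q \<beta> ^^ n) u = (lin_ann_on q S \<beta> ^^ n) u"
proof -
  have "(lin_ann q \<beta> ^^ n) u = (lin_ann_on q S \<beta> ^^ n) u \<and> fvars ((lin_ann_on q S \<beta> ^^ n) u) \<subseteq> S"
  proof (induction n)
    case (Suc n)
    then show ?case
      using lin_ann_eq_lin_ann_on[OF assms(1)]
        fvars_lin_ann_on_subset[of q S \<beta> "(lin_ann_on q S \<beta> ^^ n) u"]
      by auto
  qed (use assms in simp)
  then show ?thesis ..
qed

lemma funpow_lin_ann_on_nonzero_imp:
  assumes "finite S" "(lin_ann_on q S \<beta> ^^ n) u \<nu> \<noteq> 0"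
  shows "\<exists>\<mu>. u \<mu> \<noteq> 0 \<and> total_degree S \<mu> = total_degree S \<nu> + n"
  using assms(2)
proof (induction n arbitrary: \<nu>)
  case (Suc n)
  then have "lin_ann_on q S \<beta> ((lin_ann_on q S \<beta> ^^ n) u) \<nu> \<noteq> 0"
    by simp
  then obtain x where x: "x \<in> S" "(lin_ann_on q S \<beta> ^^ n) u (\<nu>(x := Suc (\<nu> x))) \<noteq> 0"
    by (rule lin_ann_on_nonzero_imp)
  obtain \<mu> where "u \<mu> \<noteq> 0" and \<mu>: "total_degree S \<mu> = total_degree S (\<nu>(x := Suc (\<nu> x))) + n"
    using Suc.IH[OF x(2)] by blast
  have "total_degree S (\<nu>(x := Suc (\<nu> x))) = total_degree S \<nu> + 1"
    unfolding total_degree_def using assms(1) x(1) by (simp add: sum.remove)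
  then have "total_degree S \<mu> = total_degree S \<nu> + Suc n"
    by (simp only: \<mu>)
  with \<open>u \<mu> \<noteq> 0\<close> show ?case
    by blast
qed auto

lemma op_exp_eq_finite_sum:
  assumes "fock_vec N v"
  obtains K where "\<And>\<beta> \<nu>. op_exp q \<beta> v \<nu> = (\<Sum>n<K. (lin_ann_on q (fvars v) \<beta> ^^ n) v \<nu> / fact n)"
proof -
  define S where "S = fvars v"
  have "finite S"
    using finite_fvars[OF assms] S_def by simp
  have "finite {\<mu>. v \<mu> \<noteq> 0}"
    using assms unfolding fock_vec_def by blast
  define K where "K = Suc (Max (insert 0 (total_degree S ` {\<mu>. v \<mu> \<noteq> 0})))"
  have vanish: "(lin_ann_on q S \<beta> ^^ n) v \<nu> = 0" if "n \<ge> K" for n \<beta> \<nu>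
  proof (rule ccontr)
    assume "(lin_ann_on q S \<beta> ^^ n) v \<nu> \<noteq> 0"
    then obtain \<mu> where "v \<mu> \<noteq> 0" "total_degree S \<mu> = total_degree S \<nu> + n"
      using funpow_lin_ann_on_nonzero_imp[OF \<open>finite S\<close>] by blast
    moreover have "total_degree S \<mu> \<le> Max (insert 0 (total_degree S ` {\<mu>. v \<mu> \<noteq> 0}))"
      using \<open>finite {\<mu>. v \<mu> \<noteq> 0}\<close> \<open>v \<mu> \<noteq> 0\<close> by (intro Max_ge) auto
    ultimately show False
      using that K_def by auto
  qed
  show ?thesis
  proof
    fix \<beta> \<nu>
    have "op_exp q \<beta> v \<nu> = (\<Sum>n. (lin_ann_on q S \<beta> ^^ n) v \<nu> / fact n)"
      unfolding op_exp_def S_def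
      using funpow_lin_ann_eq_lin_ann_on[OF \<open>finite S\<close>[unfolded S_def]] by simp
    also have "\<dots> = (\<Sum>n<K. (lin_ann_on q S \<beta> ^^ n) v \<nu> / fact n)"
      by (rule suminf_finite) (auto simp: vanish)
    finally show "op_exp q \<beta> v \<nu> = (\<Sum>n<K. (lin_ann_on q (fvars v) \<beta> ^^ n) v \<nu> / fact n)"
      unfolding S_def .
  qed
qed

lemma betaH_holomorphic:
  assumes "q \<noteq> 0"
  shows "(\<lambda>w. betaH N j q qh w x) holomorphic_on -{0}"
proof -
  have Z: "(\<lambda>w. Zfac q w m) holomorphic_on -{0}" for m
    unfolding Zfac_def using assms by (intro holomorphic_intros) auto
  have If: "(\<lambda>w. if c then f w else g w) holomorphic_on A"
    if "f holomorphic_on A" "g holomorphic_on A" for c and f g :: "complex \<Rightarrow> complex" and A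
    using that by (cases c) auto
  obtain b m where x: "x = (b, m)"
    by fastforce
  show ?thesis
    unfolding x betaH_def by (cases b) (auto intro!: If holomorphic_intros Z)
qed

lemma funpow_lin_ann_on_Suc:
  "(lin_ann_on q S \<beta> ^^ Suc n) u \<nu> =
     (\<Sum>x\<in>S. \<beta> x * kappa q x * of_nat (Suc (\<nu> x)) * (lin_ann_on q S \<beta> ^^ n) u (\<nu>(x := Suc (\<nu> x))))"
  by (simp add: lin_ann_on_def)

lemma funpow_lin_ann_on_betaH_holomorphic:
  assumes "q \<noteq> 0"
  shows "(\<lambda>w. (lin_ann_on q S (betaH N j q qh w) ^^ n) v \<nu>) holomorphic_on -{0}"
proof (induction n arbitrary: \<nu>)
  case (Suc n)
  show ?case
    unfolding funpow_lin_ann_on_Suc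
    by (intro holomorphic_intros betaH_holomorphic[OF assms] Suc.IH)
qed simp

lemma op_exp_betaH_holomorphic:
  assumes "fock_vec N' v" "q \<noteq> 0"
  shows "(\<lambda>w. op_exp q (betaH N j q qh w) v \<nu>) holomorphic_on -{0}"
proof -
  obtain K where K: "\<And>\<beta> \<nu>. op_exp q \<beta> v \<nu> = (\<Sum>n<K. (lin_ann_on q (fvars v) \<beta> ^^ n) v \<nu> / fact n)"
    using op_exp_eq_finite_sum[OF assms(1)] by blast
  show ?thesis
    unfolding K by (intro holomorphic_intros funpow_lin_ann_on_betaH_holomorphic[OF assms(2)]) auto
qed

lemma Dfun_nonzero:
  assumes "q \<noteq> 0" "w \<noteq> 0" "z \<noteq> 0" "z \<notin> {q * w, q / w, w / q, inverse (q * w)}"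
  shows "Dfun q z w \<noteq> 0"
proof -
  have "1 - q * z * w \<noteq> 0"
  proof
    assume "1 - q * z * w = 0"
    then have "z = inverse (q * w)"
      using assms(1,2) by (simp add: field_simps)
    with assms(4) show False by simp
  qed
  moreover have "1 - q * w / z \<noteq> 0"
  proof
    assume "1 - q * w / z = 0"
    then have "z = q * w"
      using assms(3) by (simp add: field_simps)
    with assms(4) show False by simp
  qed
  moreover have "1 - q * z / w \<noteq> 0"
  proof
    assume "1 - q * z / w = 0"
    then have "z = w / q"
      using assms(1,2) by (simp add: field_simps)
    with assms(4) show False by simp
  qed
  moreover have "1 - q / (z * w) \<noteq> 0"
  proof
    assume "1 - q / (z * w) = 0"
    then have "z = q / w"
      using assms(2,3) by (simp add: field_simps)
    with assms(4) show False by simp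
  qed
  ultimately show ?thesis
    unfolding Dfun_def by simp
qed

lemma Hc_holomorphic:
  assumes "fock_vec N v" "q \<noteq> 0" "w2 \<noteq> 0"
  shows "(\<lambda>w1. Hc N j q qh v \<nu> w1 w2) holomorphic_on -{0, q * w2, q / w2, w2 / q, inverse (q * w2)}"
    (is "_ holomorphic_on ?U")
proof -
  have "(\<lambda>w1. op_exp q (betaH N j q qh w1) v \<nu>) holomorphic_on ?U"
    by (rule holomorphic_on_subset[OF op_exp_betaH_holomorphic[OF assms(1,2)]]) auto
  moreover have "(\<lambda>w1. Dfun q w1 w2) holomorphic_on ?U"
    unfolding Dfun_def using assms(3) by (intro holomorphic_intros) auto
  ultimately show ?thesis
    unfolding Hc_def using Dfun_nonzero[OF assms(2,3)] by (intro holomorphic_intros) auto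
qed

lemma Zfac_inverse: "Zfac q (inverse w) m = Zfac q w m"
  unfolding Zfac_def by (simp add: divide_inverse add.commute)

lemma betaH_inverse: "betaH N j q qh (inverse w) = betaH N j q qh w"
  unfolding betaH_def Zfac_inverse ..

lemma Dfun_inverse_left: "Dfun q (inverse z) w = Dfun q z w"
  unfolding Dfun_def by (cases "z = 0"; cases "w = 0") (simp_all add: field_simps)

lemma Dfun_inverse_right: "Dfun q z (inverse w) = Dfun q z w"
  unfolding Dfun_def by (cases "z = 0"; cases "w = 0") (simp_all add: field_simps)

lemma Hc_inverse_left: "Hc N j q qh v \<nu> (inverse w1) w2 = Hc N j q qh v \<nu> w1 w2"
  unfolding Hc_def betaH_inverse Dfun_inverse_left ..

lemma Hc_inverse_right: "Hc N j q qh v \<nu> w1 (inverse w2) = Hc N j q qh v \<nu> w1 w2"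
  unfolding Hc_def Dfun_inverse_right ..

lemma valid_path_inverse_comp:
  fixes \<gamma> :: "real \<Rightarrow> complex"
  assumes "valid_path \<gamma>" "0 \<notin> path_image \<gamma>"
  shows "valid_path (inverse \<circ> \<gamma>)"
  using assms
  by (intro valid_path_compose_analytic[where S = "-{0}"]) (auto intro!: analytic_intros)

lemma contour_integral_inverse_comp:
  fixes \<gamma> :: "real \<Rightarrow> complex"
  assumes "valid_path \<gamma>" "0 \<notin> path_image \<gamma>"
  shows "contour_integral (inverse \<circ> \<gamma>) f = - contour_integral \<gamma> (\<lambda>u. f (inverse u) / u^2)"
proof -
  have "contour_integral (inverse \<circ> \<gamma>) f = contour_integral \<gamma> (\<lambda>u. deriv inverse u * f (inverse u))"
    using assms
    by (intro contour_integral_comp_analyticW[where s = "-{0}"]) (auto intro!: analytic_intros)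
  also have "\<dots> = contour_integral \<gamma> (\<lambda>u. - (f (inverse u) / u^2))"
  proof (intro contour_integral_cong refl)
    fix u assume "u \<in> path_image \<gamma>"
    then have "u \<noteq> 0"
      using assms(2) by auto
    then have "deriv inverse u = - inverse (u ^ 2)"
      by (intro DERIV_imp_deriv) (auto intro!: derivative_eq_intros simp: power2_eq_square)
    then show "deriv inverse u * f (inverse u) = - (f (inverse u) / u^2)"
      by (simp add: divide_inverse)
  qed
  finally show ?thesis
    by (simp add: contour_integral_neg)
qed

lemma winding_number_inverse_comp:
  fixes \<gamma> :: "real \<Rightarrow> complex"
  assumes "valid_path \<gamma>" "0 \<notin> path_image \<gamma>" "p \<noteq> 0" "inverse p \<notin> path_image \<gamma>"
  shows "winding_number (inverse \<circ> \<gamma>) p = winding_number \<gamma> (inverse p) - winding_number \<gamma> 0"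
proof -
  have "p \<notin> path_image (inverse \<circ> \<gamma>)"
    using assms(4) by (auto simp: path_image_compose)
  then have "winding_number (inverse \<circ> \<gamma>) p
      = 1/(2*pi*\<i>) * contour_integral (inverse \<circ> \<gamma>) (\<lambda>w. 1/(w - p))"
    by (intro winding_number_valid_path valid_path_inverse_comp assms(1,2))
  also have "contour_integral (inverse \<circ> \<gamma>) (\<lambda>w. 1/(w - p))
      = - contour_integral \<gamma> (\<lambda>u. 1/(inverse u - p) / u^2)"
    by (rule contour_integral_inverse_comp[OF assms(1,2)])
  also have "contour_integral \<gamma> (\<lambda>u. 1/(inverse u - p) / u^2)
      = contour_integral \<gamma> (\<lambda>u. 1/(u - 0) - 1/(u - inverse p))"
  proof (intro contour_integral_cong refl)
    fix u assume "u \<in> path_image \<gamma>"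
    then have "u \<noteq> 0" "u \<noteq> inverse p"
      using assms by auto
    moreover from this have "1 - p * u \<noteq> 0"
      using assms(3) by (auto simp: field_simps)
    ultimately show "1/(inverse u - p) / u^2 = 1/(u - 0) - 1/(u - inverse p)"
      using assms(3) by (simp add: field_simps power2_eq_square)
  qed
  also have "\<dots> = contour_integral \<gamma> (\<lambda>u. 1/(u - 0)) - contour_integral \<gamma> (\<lambda>u. 1/(u - inverse p))"
    using assms by (intro contour_integral_diff contour_integrable_inversediff) auto
  finally show ?thesis
    using winding_number_valid_path[OF assms(1,2)] winding_number_valid_path[OF assms(1,4)]
    by (simp add: o_def algebra_simps)
qed

lemma winding_number_inverse_comp_0:
  fixes \<gamma> :: "real \<Rightarrow> complex"
  assumes "valid_path \<gamma>" "0 \<notin> path_image \<gamma>"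
  shows "winding_number (inverse \<circ> \<gamma>) 0 = - winding_number \<gamma> 0"
proof -
  have "0 \<notin> path_image (inverse \<circ> \<gamma>)"
    using assms(2) by (auto simp: path_image_compose)
  then have "winding_number (inverse \<circ> \<gamma>) 0
      = 1/(2*pi*\<i>) * contour_integral (inverse \<circ> \<gamma>) (\<lambda>w. 1/(w - 0))"
    by (intro winding_number_valid_path valid_path_inverse_comp assms)
  also have "contour_integral (inverse \<circ> \<gamma>) (\<lambda>w. 1/(w - 0))
      = - contour_integral \<gamma> (\<lambda>u. 1/(inverse u - 0) / u^2)"
    by (rule contour_integral_inverse_comp[OF assms])
  also have "contour_integral \<gamma> (\<lambda>u. 1/(inverse u - 0) / u^2) = contour_integral \<gamma> (\<lambda>u. 1/(u - 0))"
    using assms by (intro contour_integral_cong refl) (auto simp: field_simps power2_eq_square)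
  finally show ?thesis
    using winding_number_valid_path[OF assms] by (simp add: o_def)
qed

lemma complex_one_plus_square_eq_0_iff: "1 + u^2 = 0 \<longleftrightarrow> u = \<i> \<or> u = - \<i>"
  for u :: complex
proof -
  have "1 + u^2 = 0 \<longleftrightarrow> u^2 = \<i>^2"
    by (auto simp: add_eq_0_iff)
  then show ?thesis
    using power2_eq_iff[of u \<i>] by simp
qed

text \<open>The rational factor (1 - u^2)/(1 + u^2) is odd under u \<mapsto> 1/u, and the measure
  du/u^2 contributes the factor u^2, so only the odd part of \<phi> survives.\<close>
lemma inversion_odd_part_identity:
  fixes u c \<phi> \<phi>' H :: complex
  assumes "u \<noteq> 0" "1 + u^2 \<noteq> 0" "\<phi> - \<phi>' = 2 * c * (1/u - u)"
  shows "(1/u) * \<phi> * ((1 - u^2) / (1 + u^2)) * H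
      + (1 / inverse u) * \<phi>' * ((1 - (inverse u)^2) / (1 + (inverse u)^2)) * H / u^2
    = 2 * c * ((1/u) * ((1 - u^2)^2 / (u * (1 + u^2))) * H)"
proof -
  define R where "R = (1 - u^2) / (1 + u^2)"
  have "1 + (inverse u)^2 = (1 + u^2) / u^2" "1 - (inverse u)^2 = - (1 - u^2) / u^2"
    using assms(1) by (simp_all add: field_simps)
  then have "(1 - (inverse u)^2) / (1 + (inverse u)^2) = - R"
    unfolding R_def using assms(1,2) by (simp add: divide_simps add.commute)
  then have "(1/u) * \<phi> * R * H
      + (1 / inverse u) * \<phi>' * ((1 - (inverse u)^2) / (1 + (inverse u)^2)) * H / u^2
    = (\<phi> - \<phi>') * R * H / u"
    using assms(1) by (simp add: field_simps power2_eq_square)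
  also have "\<dots> = 2 * c * ((1/u) * ((1 - u^2)^2 / (u * (1 + u^2))) * H)"
    unfolding assms(3) R_def using assms(1,2) by (simp add: field_simps power2_eq_square)
  finally show ?thesis
    unfolding R_def .
qed

text \<open>The winding-number conditions say exactly that u \<mapsto> 1/u turns \<gamma> into a
  contour with the opposite winding number around every point of pts.\<close>
locale inversion_separating_contour =
  fixes \<gamma> :: "real \<Rightarrow> complex" and pts :: "complex set"
  assumes valid: "valid_path \<gamma>"
    and closed: "pathfinish \<gamma> = pathstart \<gamma>"
    and finite_pts: "finite pts"
    and zero_in_pts: "0 \<in> pts"
    and inverse_in_pts: "\<And>p. p \<in> pts \<Longrightarrow> inverse p \<in> pts"
    and avoids_pts: "path_image \<gamma> \<inter> pts = {}"
    and winding_number_zero: "winding_number \<gamma> 0 = 1"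
    and winding_number_pair:
      "\<And>p. p \<in> pts \<Longrightarrow> p \<noteq> 0 \<Longrightarrow> winding_number \<gamma> p + winding_number \<gamma> (inverse p) = 1"
begin

lemma zero_notin_path_image: "0 \<notin> path_image \<gamma>"
  using avoids_pts zero_in_pts by auto

lemma holomorphic_on_inverse_substitution:
  assumes "f holomorphic_on -pts"
  shows "(\<lambda>u. f (inverse u) / u^2) holomorphic_on -pts"
proof -
  have "inverse ` (-pts) \<subseteq> -pts"
    using inverse_in_pts by (metis ComplD ComplI image_subsetI inverse_inverse_eq)
  then have "(f \<circ> inverse) holomorphic_on -pts"
    using zero_in_pts by (intro holomorphic_on_compose_gen[OF _ assms] holomorphic_intros) auto
  then show ?thesis
    using zero_in_pts by (auto intro!: holomorphic_intros simp: o_def)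
qed

lemma winding_number_inverse_comp_pts:
  assumes "p \<in> pts"
  shows "winding_number (inverse \<circ> \<gamma>) p = - winding_number \<gamma> p"
proof (cases "p = 0")
  case True
  then show ?thesis
    using winding_number_inverse_comp_0[OF valid zero_notin_path_image] winding_number_zero by simp
next
  case False
  have "inverse p \<notin> path_image \<gamma>"
    using inverse_in_pts[OF assms] avoids_pts by auto
  moreover have "winding_number \<gamma> (inverse p) = 1 - winding_number \<gamma> p"
    using winding_number_pair[OF assms False] by (simp add: eq_diff_eq add.commute)
  ultimately show ?thesis
    using winding_number_inverse_comp[OF valid zero_notin_path_image False] winding_number_zero
    by simp
qed

lemma contour_integral_inverse_substitution:
  assumes "f holomorphic_on -pts"
  shows "contour_integral \<gamma> (\<lambda>u. f (inverse u) / u^2) = contour_integral \<gamma> f"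
proof -
  have hol: "f holomorphic_on UNIV - pts"
    using assms by (simp add: Compl_eq_Diff_UNIV)
  have "path_image (inverse \<circ> \<gamma>) \<inter> pts = {}"
    using avoids_pts inverse_in_pts by (fastforce simp: path_image_compose)
  moreover have "pathfinish (inverse \<circ> \<gamma>) = pathstart (inverse \<circ> \<gamma>)"
    using closed by (simp add: pathfinish_compose pathstart_compose)
  ultimately have "contour_integral (inverse \<circ> \<gamma>) f
      = 2 * pi * \<i> * (\<Sum>p\<in>pts. winding_number (inverse \<circ> \<gamma>) p * residue f p)"
    using valid_path_inverse_comp[OF valid zero_notin_path_image]
    by (intro Residue_theorem[OF open_UNIV connected_UNIV finite_pts hol]) auto
  also have "\<dots> = - (2 * pi * \<i> * (\<Sum>p\<in>pts. winding_number \<gamma> p * residue f p))"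
    by (simp add: winding_number_inverse_comp_pts sum_negf)
  also have "\<dots> = - contour_integral \<gamma> f"
    using avoids_pts
    by (subst Residue_theorem[OF open_UNIV connected_UNIV finite_pts hol valid closed]) auto
  finally show ?thesis
    using contour_integral_inverse_comp[OF valid zero_notin_path_image, of f] by simp
qed

lemma contour_integral_symmetrize:
  assumes f: "f holomorphic_on -pts" and g: "g holomorphic_on -pts"
    and sym: "\<And>u. u \<in> path_image \<gamma> \<Longrightarrow> f u + f (inverse u) / u^2 = 2 * c * g u"
  shows "contour_integral \<gamma> f = c * contour_integral \<gamma> g"
proof -
  have "open (-pts)"
    using finite_pts by (simp add: finite_imp_closed open_Compl)
  moreover have "path_image \<gamma> \<subseteq> -pts"
    using avoids_pts by auto
  ultimately have integrable: "h contour_integrable_on \<gamma>" if "h holomorphic_on -pts" for h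
    using that valid by (intro contour_integrable_holomorphic_simple) auto
  have "2 * contour_integral \<gamma> f
      = contour_integral \<gamma> f + contour_integral \<gamma> (\<lambda>u. f (inverse u) / u^2)"
    using contour_integral_inverse_substitution[OF f] by simp
  also have "\<dots> = contour_integral \<gamma> (\<lambda>u. f u + f (inverse u) / u^2)"
    by (intro contour_integral_add[symmetric] integrable f holomorphic_on_inverse_substitution)
  also have "\<dots> = contour_integral \<gamma> (\<lambda>u. 2 * c * g u)"
    using sym by (intro contour_integral_cong) auto
  also have "\<dots> = 2 * c * contour_integral \<gamma> g"
    by (intro contour_integral_lmul integrable g)
  finally show ?thesis
    by simp
qed

lemma contour_integral_odd_part:
  assumes "\<i> \<in> pts" "- \<i> \<in> pts"
    and \<phi>: "\<phi> holomorphic_on -pts" and H: "H holomorphic_on -pts"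
    and H_inverse: "\<And>u. u \<notin> pts \<Longrightarrow> H (inverse u) = H u"
    and \<phi>_odd: "\<And>u. u \<notin> pts \<Longrightarrow> \<phi> u - \<phi> (inverse u) = 2 * c * (1/u - u)"
  shows "contour_integral \<gamma> (\<lambda>u. (1/u) * \<phi> u * ((1 - u^2) / (1 + u^2)) * H u)
    = c * contour_integral \<gamma> (\<lambda>u. (1/u) * ((1 - u^2)^2 / (u * (1 + u^2))) * H u)"
proof (rule contour_integral_symmetrize)
  have nonzero: "u \<noteq> 0" "1 + u^2 \<noteq> 0" if "u \<notin> pts" for u
    using that assms(1,2) zero_in_pts complex_one_plus_square_eq_0_iff by auto
  show "(\<lambda>u. (1/u) * \<phi> u * ((1 - u^2) / (1 + u^2)) * H u) holomorphic_on -pts"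
    "(\<lambda>u. (1/u) * ((1 - u^2)^2 / (u * (1 + u^2))) * H u) holomorphic_on -pts"
    using nonzero by (auto intro!: holomorphic_intros \<phi> H)
  fix u assume "u \<in> path_image \<gamma>"
  then have "u \<notin> pts"
    using avoids_pts by auto
  then show "(1/u) * \<phi> u * ((1 - u^2) / (1 + u^2)) * H u
      + (1 / inverse u) * \<phi> (inverse u) * ((1 - (inverse u)^2) / (1 + (inverse u)^2))
          * H (inverse u) / u^2
    = 2 * c * ((1/u) * ((1 - u^2)^2 / (u * (1 + u^2))) * H u)"
    unfolding H_inverse[OF \<open>u \<notin> pts\<close>]
    by (intro inversion_odd_part_identity nonzero \<phi>_odd \<open>u \<notin> pts\<close>)
qed

end

definition integrand_poles :: "complex \<Rightarrow> complex \<Rightarrow> complex \<Rightarrow> complex set" where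
  "integrand_poles q s w2 = {0, s, \<i>, q * w2, q / w2, inverse s, - \<i>, w2 / q, inverse (q * w2)}"

locale integration_contour = inversion_separating_contour \<gamma> "integrand_poles q s w2"
  for \<gamma> :: "real \<Rightarrow> complex" and q s w2 :: complex +
  assumes q_nonzero: "q \<noteq> 0" and w2_nonzero: "w2 \<noteq> 0"
begin

lemma not_pole_nonzero:
  assumes "u \<notin> integrand_poles q s w2"
  shows "u \<noteq> 0" "1 - s * u \<noteq> 0" "1 - s / u \<noteq> 0"
  using assms inverse_unique[of s u] by (auto simp: integrand_poles_def field_simps)

lemma Hc_holomorphic_off_poles:
  "fock_vec N v \<Longrightarrow> (\<lambda>w1. Hc N j q qh v \<nu> w1 w2) holomorphic_on -integrand_poles q s w2"
  by (rule holomorphic_on_subset[OF Hc_holomorphic[OF _ q_nonzero w2_nonzero]])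
    (auto simp: integrand_poles_def)

lemma imaginary_units_in_poles: "\<i> \<in> integrand_poles q s w2" "- \<i> \<in> integrand_poles q s w2"
  by (simp_all add: integrand_poles_def)

lemma odd_part_1_minus_s:
  assumes "u \<notin> integrand_poles q s w2"
  shows "(1 - s * u) * (1 - q / (u * w2)) - (1 - s * inverse u) * (1 - q / (inverse u * w2))
    = 2 * (- (q / (2 * w2)) * (1 - s * w2 / q)) * (1/u - u)"
  using not_pole_nonzero[OF assms] q_nonzero w2_nonzero by (simp add: field_simps)

lemma contour_integral_Hc_times_1_minus_s_w1:
  assumes "fock_vec N v"
  shows "contour_integral \<gamma> (\<lambda>w1. (1 / w1) * (1 - s * w1) * (1 - q / (w1 * w2))
        * ((1 - w1 ^ 2) / (1 + w1 ^ 2)) * Hc N j q qh v \<nu> w1 w2)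
      = - (q / (2 * w2)) * (1 - s * w2 / q) * contour_integral \<gamma> (\<lambda>w1. (1 / w1)
        * ((1 - w1 ^ 2) ^ 2 / (w1 * (1 + w1 ^ 2))) * Hc N j q qh v \<nu> w1 w2)"
proof -
  have "(\<lambda>u. (1 - s * u) * (1 - q / (u * w2))) holomorphic_on -integrand_poles q s w2"
    using not_pole_nonzero by (intro holomorphic_intros) auto
  then have "contour_integral \<gamma> (\<lambda>u. (1/u) * ((1 - s * u) * (1 - q / (u * w2)))
        * ((1 - u^2) / (1 + u^2)) * Hc N j q qh v \<nu> u w2)
      = - (q / (2 * w2)) * (1 - s * w2 / q) * contour_integral \<gamma> (\<lambda>u. (1/u)
        * ((1 - u^2)^2 / (u * (1 + u^2))) * Hc N j q qh v \<nu> u w2)"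
    by (rule contour_integral_odd_part[OF imaginary_units_in_poles _
          Hc_holomorphic_off_poles[OF assms] Hc_inverse_left odd_part_1_minus_s])
  then show ?thesis
    by (simp only: mult.assoc)
qed

lemma contour_integral_Hc_times_w1:
  assumes "fock_vec N v"
  shows "contour_integral \<gamma> (\<lambda>w1. (1 / w1) * w1 * (1 - q / (w1 * w2))
        * ((1 - w1 ^ 2) / (1 + w1 ^ 2)) * Hc N j q qh v \<nu> w1 w2)
      = - (1 / 2) * contour_integral \<gamma> (\<lambda>w1. (1 / w1)
        * ((1 - w1 ^ 2) ^ 2 / (w1 * (1 + w1 ^ 2))) * Hc N j q qh v \<nu> w1 w2)"
proof -
  have "(\<lambda>u. u * (1 - q / (u * w2))) holomorphic_on -integrand_poles q s w2"
    using not_pole_nonzero by (intro holomorphic_intros) auto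
  moreover have "u * (1 - q / (u * w2)) - inverse u * (1 - q / (inverse u * w2))
      = 2 * (- (1/2)) * (1/u - u)"
    if "u \<notin> integrand_poles q s w2" for u
    using not_pole_nonzero[OF that] w2_nonzero by (simp add: field_simps)
  ultimately have "contour_integral \<gamma> (\<lambda>u. (1/u) * (u * (1 - q / (u * w2)))
        * ((1 - u^2) / (1 + u^2)) * Hc N j q qh v \<nu> u w2)
      = - (1/2) * contour_integral \<gamma> (\<lambda>u. (1/u)
        * ((1 - u^2)^2 / (u * (1 + u^2))) * Hc N j q qh v \<nu> u w2)"
    by (rule contour_integral_odd_part[OF imaginary_units_in_poles _
          Hc_holomorphic_off_poles[OF assms] Hc_inverse_left])
  then show ?thesis
    by (simp only: mult.assoc)
qed

text \<open>Dividing H by the inversion-invariant factor (1 - s w1)(1 - s/w1) reduces this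
  identity to the one with weight (1 - s w1).\<close>
lemma contour_integral_Hc_div_1_minus_s_div_w1:
  assumes "fock_vec N v"
  shows "contour_integral \<gamma> (\<lambda>w1. (1 / w1) * ((1 - q / (w1 * w2)) / (1 - s / w1))
        * ((1 - w1 ^ 2) / (1 + w1 ^ 2)) * Hc N j q qh v \<nu> w1 w2)
      = - (q / (2 * w2)) * (1 - s * w2 / q) * contour_integral \<gamma> (\<lambda>w1. (1 / w1)
        * ((1 - w1 ^ 2) ^ 2 / (w1 * (1 + w1 ^ 2)))
        * (Hc N j q qh v \<nu> w1 w2 / ((1 - s * w1) * (1 - s / w1))))"
proof -
  define H where "H u = Hc N j q qh v \<nu> u w2 / ((1 - s * u) * (1 - s / u))" for u
  have "(\<lambda>u. (1 - s * u) * (1 - q / (u * w2))) holomorphic_on -integrand_poles q s w2"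
    "H holomorphic_on -integrand_poles q s w2"
    unfolding H_def using not_pole_nonzero
    by (auto intro!: holomorphic_intros Hc_holomorphic_off_poles[OF assms])
  moreover have "H (inverse u) = H u" for u
    unfolding H_def Hc_inverse_left by (simp add: divide_inverse mult.commute)
  ultimately have "contour_integral \<gamma> (\<lambda>u. (1/u) * ((1 - s * u) * (1 - q / (u * w2)))
        * ((1 - u^2) / (1 + u^2)) * H u)
      = - (q / (2 * w2)) * (1 - s * w2 / q) * contour_integral \<gamma> (\<lambda>u. (1/u)
        * ((1 - u^2)^2 / (u * (1 + u^2))) * H u)"
    by (intro contour_integral_odd_part imaginary_units_in_poles odd_part_1_minus_s)
  moreover have "contour_integral \<gamma> (\<lambda>u. (1 / u) * ((1 - q / (u * w2)) / (1 - s / u))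
        * ((1 - u ^ 2) / (1 + u ^ 2)) * Hc N j q qh v \<nu> u w2)
      = contour_integral \<gamma> (\<lambda>u. (1/u) * ((1 - s * u) * (1 - q / (u * w2)))
        * ((1 - u^2) / (1 + u^2)) * H u)"
  proof (rule contour_integral_cong[OF refl])
    fix u assume "u \<in> path_image \<gamma>"
    then have "u \<notin> integrand_poles q s w2"
      using avoids_pts by auto
    from not_pole_nonzero[OF this] show "(1 / u) * ((1 - q / (u * w2)) / (1 - s / u))
        * ((1 - u ^ 2) / (1 + u ^ 2)) * Hc N j q qh v \<nu> u w2
      = (1/u) * ((1 - s * u) * (1 - q / (u * w2))) * ((1 - u^2) / (1 + u^2)) * H u"
      unfolding H_def by (simp add: mult_ac)
  qed
  ultimately show ?thesis
    unfolding H_def by simp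
qed

end

lemma integration_contourI:
  fixes \<gamma> :: "real \<Rightarrow> complex" and q s w2 :: complex
  assumes "valid_path \<gamma>" "pathfinish \<gamma> = pathstart \<gamma>" "q \<noteq> 0" "w2 \<noteq> 0"
    and inside: "\<forall>p\<in>{0, s, \<i>, q * w2, q / w2}. p \<notin> path_image \<gamma> \<and> winding_number \<gamma> p = 1"
    and outside: "\<forall>p\<in>{- \<i>, w2 / q, inverse (q * w2)}. p \<notin> path_image \<gamma> \<and> winding_number \<gamma> p = 0"
    and outside_s: "s \<noteq> 0 \<longrightarrow> inverse s \<notin> path_image \<gamma> \<and> winding_number \<gamma> (inverse s) = 0"
  shows "integration_contour \<gamma> q s w2"
proof unfold_locales
  have inverses: "inverse \<i> = - \<i>" "inverse (- \<i>) = \<i>"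
      "inverse (q / w2) = w2 / q" "inverse (w2 / q) = q / w2"
    by (simp_all add: inverse_eq_divide)
  then show "inverse p \<in> integrand_poles q s w2" if "p \<in> integrand_poles q s w2" for p
    using that by (auto simp: integrand_poles_def)
  show "winding_number \<gamma> p + winding_number \<gamma> (inverse p) = 1"
    if "p \<in> integrand_poles q s w2" "p \<noteq> 0" for p
    using that inside outside outside_s inverses by (auto simp: integrand_poles_def)
  show "path_image \<gamma> \<inter> integrand_poles q s w2 = {}"
    using inside outside outside_s by (cases "s = 0") (auto simp: integrand_poles_def)
qed (use assms in \<open>auto simp: integrand_poles_def\<close>)

theorem mainTheorem3:
  fixes N j :: nat and q qh s w2 :: complex and \<gamma> :: "real \<Rightarrow> complex"
    and v :: fock and \<nu> :: monom
  assumes "1 \<le> N" and "1 \<le> j" and "j \<le> N"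
    and "0 < norm q" and "norm q < 1" and "qh ^ 2 = q"
    and "w2 \<noteq> 0"
    and "valid_path \<gamma>" and "pathfinish \<gamma> = pathstart \<gamma>" and "simple_path \<gamma>"
    and "\<forall>p\<in>{0, s, \<i>, q * w2, q / w2}. p \<notin> path_image \<gamma> \<and> winding_number \<gamma> p = 1"
    and "\<forall>p\<in>{- \<i>, w2 / q, inverse (q * w2)}. p \<notin> path_image \<gamma> \<and> winding_number \<gamma> p = 0"
    and "s \<noteq> 0 \<longrightarrow> inverse s \<notin> path_image \<gamma> \<and> winding_number \<gamma> (inverse s) = 0"
    and "fock_vec N v"
  shows
   "contour_integral \<gamma> (\<lambda>w1. (1 / w1) * (1 - s * w1) * (1 - q / (w1 * w2))
        * ((1 - w1 ^ 2) / (1 + w1 ^ 2)) * Hc N j q qh v \<nu> w1 w2)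
      = - (q / (2 * w2)) * (1 - s * w2 / q) * contour_integral \<gamma> (\<lambda>w1. (1 / w1)
        * ((1 - w1 ^ 2) ^ 2 / (w1 * (1 + w1 ^ 2))) * Hc N j q qh v \<nu> w1 w2)
    \<and> contour_integral \<gamma> (\<lambda>w1. (1 / w1) * w1 * (1 - q / (w1 * w2))
        * ((1 - w1 ^ 2) / (1 + w1 ^ 2)) * Hc N j q qh v \<nu> w1 w2)
      = - (1 / 2) * contour_integral \<gamma> (\<lambda>w1. (1 / w1)
        * ((1 - w1 ^ 2) ^ 2 / (w1 * (1 + w1 ^ 2))) * Hc N j q qh v \<nu> w1 w2)
    \<and> contour_integral \<gamma> (\<lambda>w1. (1 / w1) * ((1 - q / (w1 * w2)) / (1 - s / w1))
        * ((1 - w1 ^ 2) / (1 + w1 ^ 2)) * Hc N j q qh v \<nu> w1 w2)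
      = - (q / (2 * w2)) * (1 - s * w2 / q) * contour_integral \<gamma> (\<lambda>w1. (1 / w1)
        * ((1 - w1 ^ 2) ^ 2 / (w1 * (1 + w1 ^ 2)))
        * (Hc N j q qh v \<nu> w1 w2 / ((1 - s * w1) * (1 - s / w1))))
    \<and> contour_integral \<gamma> (\<lambda>w1. (1 / w1)
        * ((1 - w1 ^ 2) ^ 2 / (w1 * (1 + w1 ^ 2))) * Hc N j q qh v \<nu> w1 w2)
      = contour_integral \<gamma> (\<lambda>w1. (1 / w1)
        * ((1 - w1 ^ 2) ^ 2 / (w1 * (1 + w1 ^ 2))) * Hc N j q qh v \<nu> w1 (inverse w2))"
proof -
  have "q \<noteq> 0"
    using assms(4) by auto
  interpret integration_contour \<gamma> q s w2
    using assms(8,9) \<open>q \<noteq> 0\<close> assms(7,11-13) by (rule integration_contourI)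
  show ?thesis
    unfolding Hc_inverse_right
    by (intro conjI refl contour_integral_Hc_times_1_minus_s_w1 contour_integral_Hc_times_w1
        contour_integral_Hc_div_1_minus_s_div_w1 assms(14))
qed

end
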